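(* Let $f$ be a measurable map preserving a probability measure $\mu$. Let $(U_n)$ and $(V_n)$ be two nested sequences of measurable sets ($U_{n+1}\subset U_n$, $V_{n+1}\subset V_n$) with $V_n\subset U_n$ and $\mu(V_n)>0$ for each $n$, and such that $\mu(U_n\setminus V_n)/\mu(U_n)\to0$ as $n\to\infty$. For $*\in\{U,V\}$ and $\ell\ge1$ put $$\hat\alpha^*_\ell=\lim_{K\to\infty}\lim_{n\to\infty}\mu_{*_n}\big(\tau^{\ell-1}_{*_n}\le K\big).$$ Then $\hat\alpha^U_\ell=\hat\alpha^V_\ell$ for every $\ell\ge1$ (i.e., for each $\ell$ the limits defining $\hat\alpha^U_\ell$ exist if and only if those defining $\hat\alpha^V_\ell$ exist, and then they coincide).
   Context: $\tau_W(x)=\min\{j\ge1:f^jx\in W\}$, $\tau^0_W=0$, $\tau^j_W=\tau^{j-1}_W+\tau_W\circ f^{\tau^{j-1}_W}$; $\mu_W(A)=\mu(A\cap W)/\mu(W)$. *)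

theory Defs
  imports "HOL-Probability.Probability" "HOL-Library.Extended_Nat"
begin

definition hit :: "('a \<Rightarrow> 'a) \<Rightarrow> 'a set \<Rightarrow> 'a \<Rightarrow> enat" where
  "hit f W x = (if \<exists>j\<ge>1. (f ^^ j) x \<in> W
                then enat (LEAST j. j \<ge> 1 \<and> (f ^^ j) x \<in> W) else \<infinity>)"

fun hitk :: "('a \<Rightarrow> 'a) \<Rightarrow> 'a set \<Rightarrow> nat \<Rightarrow> 'a \<Rightarrow> enat" where
  "hitk f W 0 x = 0"
| "hitk f W (Suc j) x =
     (case hitk f W j x of enat t \<Rightarrow> enat t + hit f W ((f ^^ t) x) | \<infinity> \<Rightarrow> \<infinity>)"

definition cond_meas :: "'a measure \<Rightarrow> 'a set \<Rightarrow> 'a set \<Rightarrow> real" where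
  "cond_meas M W A = measure M (A \<inter> W) / measure M W"

definition has_alpha_hat :: "'a measure \<Rightarrow> ('a \<Rightarrow> 'a) \<Rightarrow> (nat \<Rightarrow> 'a set) \<Rightarrow> nat \<Rightarrow> real \<Rightarrow> bool" where
  "has_alpha_hat M f W l a \<longleftrightarrow>
     (\<exists>g :: nat \<Rightarrow> real.
        (\<forall>K. (\<lambda>n. cond_meas M (W n) {x \<in> space M. hitk f (W n) (l - 1) x \<le> enat K})
               \<longlonglongrightarrow> g K)
      \<and> g \<longlonglongrightarrow> a)"

end

theory Submission
  imports Defs
begin

text \<open>
  Put \<open>D = U - V\<close>. If neither \<open>x\<close> nor any of \<open>f x, \<dots>, f\<^sup>K x\<close> lies in \<open>D\<close>,
  the orbit of \<open>x\<close> cannot tell \<open>U\<close> from \<open>V\<close> up to time \<open>K\<close>, so \<open>x \<in> U\<close> with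
  \<open>\<tau>\<^sup>j\<^sub>U x \<le> K\<close> iff \<open>x \<in> V\<close> with \<open>\<tau>\<^sup>j\<^sub>V x \<le> K\<close>. By invariance of \<open>\<mu>\<close> the exceptional set has
  measure at most \<open>(K + 1) \<mu>(D)\<close>, hence
  \<open>|\<mu>\<^sub>U(\<tau>\<^sup>j\<^sub>U \<le> K) - \<mu>\<^sub>V(\<tau>\<^sup>j\<^sub>V \<le> K)| \<le> (K + 2) \<mu>(U - V) / \<mu>(U)\<close>.
  For fixed \<open>K\<close> this tends to \<open>0\<close> along the sequences, so the inner limits, and with
  them the iterated limits, exist simultaneously and agree.
\<close>

lemma funpow_measurable: "f \<in> measurable M M \<Longrightarrow> f ^^ n \<in> measurable M M"
  by (induction n) (auto intro: measurable_comp)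

lemma measurable_hit:
  assumes f: "f \<in> measurable M M" and W: "W \<in> sets M"
  shows "hit f W \<in> measurable M (count_space UNIV)"
proof -
  note [measurable] = funpow_measurable[OF f] W
  show ?thesis
    unfolding hit_def[abs_def] by measurable
qed

lemma measurable_hitk:
  assumes f: "f \<in> measurable M M" and W: "W \<in> sets M"
  shows "hitk f W j \<in> measurable M (count_space UNIV)"
proof (induction j)
  case (Suc j)
  have "(\<lambda>x. case v of enat t \<Rightarrow> enat t + hit f W ((f ^^ t) x) | \<infinity> \<Rightarrow> \<infinity>)
          \<in> measurable M (count_space UNIV)" for v
  proof (cases v)
    case (enat t)
    have "(\<lambda>x. hit f W ((f ^^ t) x)) \<in> measurable M (count_space UNIV)"
      using measurable_comp[OF funpow_measurable[OF f] measurable_hit[OF f W]]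
      by (simp add: comp_def)
    with enat show ?thesis
      by simp
  qed simp
  from measurable_compose_countable[OF this Suc.IH] show ?case
    by simp
qed simp

lemma hit_eq_enat_iff:
  "hit f W y = enat s \<longleftrightarrow> 1 \<le> s \<and> (f ^^ s) y \<in> W \<and> (\<forall>j. 1 \<le> j \<and> j < s \<longrightarrow> (f ^^ j) y \<notin> W)"
  (is "_ \<longleftrightarrow> ?first s")
proof
  assume "hit f W y = enat s"
  then have "\<exists>j\<ge>1. (f ^^ j) y \<in> W" and "s = (LEAST j. j \<ge> 1 \<and> (f ^^ j) y \<in> W)"
    by (auto simp: hit_def split: if_splits)
  then show "?first s"
    by (metis (mono_tags, lifting) LeastI not_less_Least)
next
  assume "?first s"
  then have "(LEAST j. j \<ge> 1 \<and> (f ^^ j) y \<in> W) = s"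
    by (intro Least_equality) (auto simp: not_less[symmetric])
  with \<open>?first s\<close> show "hit f W y = enat s"
    by (auto simp: hit_def)
qed

lemma hit_cong_upto:
  assumes "hit f U y \<le> enat m"
    and agree: "\<And>i. 1 \<le> i \<Longrightarrow> i \<le> m \<Longrightarrow> (f ^^ i) y \<in> U \<longleftrightarrow> (f ^^ i) y \<in> V"
  shows "hit f V y = hit f U y"
proof -
  obtain s where s: "hit f U y = enat s" and "s \<le> m"
    using assms(1) by (cases "hit f U y") auto
  then have "hit f V y = enat s"
    using agree unfolding hit_eq_enat_iff by (meson less_imp_le_nat order.trans)
  with s show ?thesis
    by simp
qed

lemma hitk_cong_upto:
  assumes agree: "\<And>i. 1 \<le> i \<Longrightarrow> i \<le> K \<Longrightarrow> (f ^^ i) x \<in> U \<longleftrightarrow> (f ^^ i) x \<in> V"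
    and "hitk f U j x \<le> enat K"
  shows "hitk f V j x = hitk f U j x"
  using assms(2)
proof (induction j)
  case (Suc j)
  obtain t where t: "hitk f U j x = enat t"
    using Suc.prems by (cases "hitk f U j x") auto
  obtain s where s: "hit f U ((f ^^ t) x) = enat s"
    using Suc.prems t by (cases "hit f U ((f ^^ t) x)") auto
  have "t + s \<le> K"
    using Suc.prems t s by simp
  then have "hit f V ((f ^^ t) x) = hit f U ((f ^^ t) x)"
    using s agree[of "_ + t"] by (intro hit_cong_upto[where m = s]) (auto simp: funpow_add)
  moreover have "hitk f V j x = enat t"
    using Suc.IH t \<open>t + s \<le> K\<close> by simp
  ultimately show ?case
    using t by simp
qed simp

lemma hitk_le_cong_upto:
  assumes "\<And>i. 1 \<le> i \<Longrightarrow> i \<le> K \<Longrightarrow> (f ^^ i) x \<in> U \<longleftrightarrow> (f ^^ i) x \<in> V"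
  shows "hitk f U j x \<le> enat K \<longleftrightarrow> hitk f V j x \<le> enat K"
  using hitk_cong_upto[of K f x U V j] hitk_cong_upto[of K f x V U j] assms by auto

lemma measure_funpow_vimage:
  assumes f: "f \<in> measurable M M" and inv: "distr M M f = M" and D: "D \<in> sets M"
  shows "measure M ((f ^^ i) -` D \<inter> space M) = measure M D"
proof (induction i)
  case 0
  then show ?case
    using sets.sets_into_space[OF D] by (simp add: Int_absorb2)
next
  case (Suc i)
  have "(f ^^ Suc i) -` D \<inter> space M = f -` ((f ^^ i) -` D \<inter> space M) \<inter> space M"
    using measurable_space[OF f] by (auto simp: funpow_swap1)
  also have "measure M \<dots> = measure (distr M M f) ((f ^^ i) -` D \<inter> space M)"
    using measurable_sets[OF funpow_measurable[OF f] D] by (simp add: measure_distr[OF f])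
  also have "\<dots> = measure M D"
    using inv Suc.IH by simp
  finally show ?case .
qed

lemma measure_UN_funpow_vimage_le:
  assumes "f \<in> measurable M M" and "distr M M f = M" and "D \<in> sets M"
  shows "measure M (\<Union>i\<in>{1..K}. (f ^^ i) -` D \<inter> space M) \<le> real K * measure M D"
proof -
  have "measure M (\<Union>i\<in>{1..K}. (f ^^ i) -` D \<inter> space M)
      \<le> (\<Sum>i\<in>{1..K}. measure M ((f ^^ i) -` D \<inter> space M))"
    using measurable_sets[OF funpow_measurable] assms by (intro measure_UNION_le) auto
  also have "\<dots> = real K * measure M D"
    using measure_funpow_vimage[OF assms] by simp
  finally show ?thesis .
qed

lemma (in finite_measure) abs_measure_diff_le:
  assumes "A \<in> sets M" "B \<in> sets M" "C \<in> sets M" "A - C \<subseteq> B" "B - C \<subseteq> A"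
  shows "\<bar>measure M A - measure M B\<bar> \<le> measure M C"
proof -
  have "measure M X \<le> measure M Y + measure M C"
    if "X \<in> sets M" "Y \<in> sets M" "X - C \<subseteq> Y" for X Y
  proof -
    have "measure M X \<le> measure M (Y \<union> C)"
      using that assms(3) by (intro finite_measure_mono) auto
    also have "\<dots> \<le> measure M Y + measure M C"
      using that assms(3) by (intro measure_Un_le)
    finally show ?thesis .
  qed
  from this[of A B] this[of B A] show ?thesis
    using assms by linarith
qed

lemma abs_divide_diff_le:
  fixes a b u v :: real
  assumes "0 < v" "v \<le> u" "0 \<le> b" "b \<le> v"
  shows "\<bar>a / u - b / v\<bar> \<le> (\<bar>a - b\<bar> + (u - v)) / u"
proof -
  have u: "0 < u"
    using assms by linarith
  have "a / u - b / v = (a - b) / u - (b / v) * ((u - v) / u)"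
    using u assms(1) by (simp add: field_simps)
  moreover have "0 \<le> (b / v) * ((u - v) / u)"
    using assms u by simp
  moreover have "(b / v) * ((u - v) / u) \<le> (u - v) / u"
    using assms u by (intro mult_left_le_one_le) auto
  moreover have "\<bar>(a - b) / u\<bar> = \<bar>a - b\<bar> / u"
    using u by simp
  ultimately show ?thesis
    unfolding add_divide_distrib by linarith
qed

lemma (in finite_measure) abs_cond_meas_hitk_diff_le:
  assumes f: "f \<in> measurable M M" and inv: "distr M M f = M"
    and U: "U \<in> sets M" and V: "V \<in> sets M" and "V \<subseteq> U" and "measure M V > 0"
  shows "\<bar>cond_meas M U {x \<in> space M. hitk f U j x \<le> enat K}
          - cond_meas M V {x \<in> space M. hitk f V j x \<le> enat K}\<bar>
         \<le> (real K + 2) * (measure M (U - V) / measure M U)"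
proof -
  define D where "D = U - V"
  define E where "E = (\<Union>i\<in>{1..K}. (f ^^ i) -` D \<inter> space M)"
  define A where "A W = {x \<in> space M. hitk f W j x \<le> enat K} \<inter> W" for W
  have D: "D \<in> sets M"
    unfolding D_def using U V by auto
  have E: "E \<in> sets M"
    unfolding E_def using measurable_sets[OF funpow_measurable[OF f] D] by (intro sets.finite_UN) auto
  have A: "A W \<in> sets M" if "W \<in> sets M" for W
    using measurable_sets[OF measurable_hitk[OF f that, of j], of "{..enat K}"] that
    unfolding A_def by (auto simp: vimage_def Int_def conj_commute)
  have "x \<in> A U \<longleftrightarrow> x \<in> A V" if "x \<in> space M" "x \<notin> D \<union> E" for x
  proof -
    have "(f ^^ i) x \<in> U \<longleftrightarrow> (f ^^ i) x \<in> V" if "1 \<le> i" "i \<le> K" for i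
      using that \<open>V \<subseteq> U\<close> \<open>x \<in> space M\<close> \<open>x \<notin> D \<union> E\<close> unfolding D_def E_def by auto
    then show ?thesis
      using hitk_le_cong_upto[of K f x U V j] that \<open>V \<subseteq> U\<close> unfolding A_def D_def by auto
  qed
  then have "\<bar>measure M (A U) - measure M (A V)\<bar> \<le> measure M (D \<union> E)"
    using A[OF U] A[OF V] D E by (intro abs_measure_diff_le) (auto simp: A_def)
  also have "\<dots> \<le> (real K + 1) * measure M D"
    using measure_Un_le[OF D E] measure_UN_funpow_vimage_le[OF f inv D, of K]
    unfolding E_def by (simp add: algebra_simps)
  finally have numerators: "\<bar>measure M (A U) - measure M (A V)\<bar> \<le> (real K + 1) * measure M D" .
  have denominators: "measure M U - measure M V = measure M D"
    unfolding D_def using finite_measure_Diff[OF U V] \<open>V \<subseteq> U\<close> by (simp add: Int_absorb2)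
  have "\<bar>measure M (A U) / measure M U - measure M (A V) / measure M V\<bar>
      \<le> (\<bar>measure M (A U) - measure M (A V)\<bar> + (measure M U - measure M V)) / measure M U"
    using \<open>measure M V > 0\<close> finite_measure_mono[OF \<open>V \<subseteq> U\<close> U] V
    by (intro abs_divide_diff_le) (auto intro: finite_measure_mono simp: A_def)
  also have "\<dots> \<le> ((real K + 1) * measure M D + measure M D) / measure M U"
    using numerators denominators by (intro divide_right_mono) auto
  finally show ?thesis
    unfolding cond_meas_def A_def D_def by (simp add: Int_assoc algebra_simps)
qed

theorem lemma5p5:
  fixes M :: "'a measure" and f :: "'a \<Rightarrow> 'a" and U V :: "nat \<Rightarrow> 'a set"
    and l :: nat and a :: real
  assumes "prob_space M"
    and "f \<in> measurable M M" and "distr M M f = M"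
    and "\<And>n. U n \<in> sets M" and "\<And>n. V n \<in> sets M"
    and "\<And>n. U (Suc n) \<subseteq> U n" and "\<And>n. V (Suc n) \<subseteq> V n"
    and "\<And>n. V n \<subseteq> U n" and "\<And>n. measure M (V n) > 0"
    and "(\<lambda>n. measure M (U n - V n) / measure M (U n)) \<longlonglongrightarrow> 0"
    and "l \<ge> 1"
  shows "has_alpha_hat M f U l a \<longleftrightarrow> has_alpha_hat M f V l a"
proof -
  interpret finite_measure M
    using assms(1) by (rule prob_space.axioms)
  define p where "p W K n = cond_meas M (W n) {x \<in> space M. hitk f (W n) (l - 1) x \<le> enat K}"
    for W :: "nat \<Rightarrow> 'a set" and K n :: nat
  have "(\<lambda>n. p U K n - p V K n) \<longlonglongrightarrow> 0" for K
  proof (rule Lim_null_comparison)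
    show "\<forall>\<^sub>F n in sequentially.
        norm (p U K n - p V K n) \<le> (real K + 2) * (measure M (U n - V n) / measure M (U n))"
      unfolding p_def using abs_cond_meas_hitk_diff_le[OF assms(2-5,8,9)] by simp
    show "(\<lambda>n. (real K + 2) * (measure M (U n - V n) / measure M (U n))) \<longlonglongrightarrow> 0"
      using tendsto_mult_right_zero[OF assms(10)] .
  qed
  then have "p U K \<longlonglongrightarrow> c \<longleftrightarrow> p V K \<longlonglongrightarrow> c" for K c
    using Lim_transform Lim_transform2 by blast
  then show ?thesis
    unfolding has_alpha_hat_def p_def by simp
qed

end
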